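(* Define $a_n\langle B_n\rangle$, $n\ge0$, by \[ \sum_{n=0}^{\infty}\frac{a_n\langle B_n\rangle}{n!}\alpha^n=\frac{1}{1-\alpha}\exp\!\Big(\frac{1}{1-\alpha}-1\Big). \] Then for every $n\ge0$, \[ a_n\langle B_n\rangle=\sum_{k=0}^{n}|s(n,k)|\,B_{k+1}, \] where $B_m$ is the $m$-th Bell number and $|s(n,k)|$ is the unsigned Stirling number of the first kind.
   Context: $B_m$ is the number of partitions of an $m$-element set ($B_0=1,B_1=1,B_2=2,B_3=5,\dots$). $|s(n,k)|$ is the number of permutations of $n$ elements with exactly $k$ disjoint cycles, with $|s(0,0)|=1$ and $|s(n,0)|=0$ for $n\ge1$. *)

theory Defs
  imports "HOL-Combinatorics.Stirling" "HOL-Library.Disjoint_Sets"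
    "HOL-Computational_Algebra.Formal_Power_Series"
begin

definition Bell :: "nat \<Rightarrow> nat" where
  "Bell m = card {P. partition_on {0..<m} P}"

definition aB_egf :: "real fps" where
  "aB_egf = inverse (1 - fps_X) * (fps_exp 1 oo (inverse (1 - fps_X) - 1))"

definition aB :: "nat \<Rightarrow> real" where
  "aB n = fact n * fps_nth aB_egf n"

end

theory Submission
  imports Defs
begin

text \<open>
  Splitting off the block that contains a new element gives the recurrence
  B_{n+1} = \<Sum>_i (n choose i) B_{n-i}, so the exponential generating function B(x) of the
  Bell numbers satisfies B' = e^x B, i.e. B(x) = exp (e^x - 1), and B' has coefficients
  B_{n+1} / n!. For L(x) = -ln (1 - x) = \<Sum>_{n\<ge>1} x^n / n one has e^L = 1 / (1 - x), so the
  given series is e^L B(L) = B'(L). Since L^k / k! is the exponential generating function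
  of the unsigned Stirling numbers |s(n,k)| (both satisfy the same recurrence in n), the
  n-th coefficient of B'(L) is the claimed sum.
\<close>

unbundle fps_syntax

abbreviation set_partitions :: "'a set \<Rightarrow> 'a set set set" where
  "set_partitions A \<equiv> {P. partition_on A P}"

lemma partition_on_inj_image':
  assumes "partition_on A P" and "inj_on f A"
  shows "partition_on (f ` A) ((`) f ` P)"
proof -
  have "{} \<notin> (`) f ` P"
    using partition_onD3[OF assms(1)] by auto
  then show ?thesis
    using partition_on_inj_image[OF assms] by simp
qed

lemma card_set_partitions_le_inj_image:
  assumes "inj_on f A" and "finite A"
  shows "card (set_partitions A) \<le> card (set_partitions (f ` A))"
proof (rule card_inj_on_le)
  have "inj_on ((`) ((`) f)) (Pow (Pow A))"
    using assms(1) by (intro inj_on_image_Pow)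
  moreover have "set_partitions A \<subseteq> Pow (Pow A)"
    by (auto simp: partition_on_def)
  ultimately show "inj_on ((`) ((`) f)) (set_partitions A)"
    by (rule inj_on_subset)
  show "(`) ((`) f) ` set_partitions A \<subseteq> set_partitions (f ` A)"
    using partition_on_inj_image'[OF _ assms(1)] by blast
  show "finite (set_partitions (f ` A))"
    using assms(2) by (intro finitely_many_partition_on finite_imageI)
qed

lemma card_set_partitions_inj_image:
  assumes "inj_on f A" and "finite A"
  shows "card (set_partitions (f ` A)) = card (set_partitions A)"
proof (rule antisym)
  show "card (set_partitions (f ` A)) \<le> card (set_partitions A)"
    using card_set_partitions_le_inj_image[OF inj_on_the_inv_into[OF assms(1)]] assms
    by simp
qed (rule card_set_partitions_le_inj_image[OF assms])

lemma card_set_partitions_eq_Bell: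
  assumes "finite A"
  shows "card (set_partitions A) = Bell (card A)"
proof -
  obtain h where "bij_betw h A {0..<card A}"
    using ex_bij_betw_finite_nat[OF assms] by blast
  then show ?thesis
    unfolding Bell_def bij_betw_def
    using card_set_partitions_inj_image[OF _ assms, of h] by simp
qed

lemma set_partitions_insert:
  assumes a: "a \<notin> A"
  shows "set_partitions (insert a A) = (\<Union>S\<in>Pow A. insert (insert a S) ` set_partitions (A - S))"
proof (intro equalityI subsetI)
  fix P assume "P \<in> set_partitions (insert a A)"
  then have P: "partition_on (insert a A) P" by simp
  obtain p where p: "p \<in> P" "a \<in> p"
    using partition_onD1[OF P] by auto
  define S where "S = p - {a}"
  have p_eq: "p = insert a S"
    using p by (auto simp: S_def)
  have S_sub: "S \<in> Pow A"
    using P p partition_onD1 a by (auto simp: S_def)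
  have "disjnt p (\<Union>(P - {p}))"
    using P p unfolding partition_on_def disjoint_def disjnt_def by blast
  moreover have P_eq: "P = insert p (P - {p})"
    using p by auto
  ultimately have "partition_on (insert a A - p) (P - {p})"
    using P partition_on_insert by metis
  moreover have "insert a A - p = A - S"
    using p_eq a by auto
  ultimately have "P - {p} \<in> set_partitions (A - S)"
    by simp
  then show "P \<in> (\<Union>S\<in>Pow A. insert (insert a S) ` set_partitions (A - S))"
    using S_sub P_eq p_eq by blast
next
  fix P assume "P \<in> (\<Union>S\<in>Pow A. insert (insert a S) ` set_partitions (A - S))"
  then obtain S Q where S: "S \<subseteq> A" and Q: "partition_on (A - S) Q"
    and P: "P = insert (insert a S) Q"
    by auto
  have block_disjnt: "disjnt (insert a S) (\<Union>Q)"
    using partition_onD1[OF Q] a by (auto simp: disjnt_def)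
  moreover have "insert a A - insert a S = A - S"
    using a by auto
  ultimately have "partition_on (insert a A) (insert (insert a S) Q)"
    using partition_on_insert[OF block_disjnt] Q S by auto
  then show "P \<in> set_partitions (insert a A)"
    using P by simp
qed

lemma card_set_partitions_insert:
  assumes a: "a \<notin> A" and "finite A"
  shows "card (set_partitions (insert a A)) = (\<Sum>S\<in>Pow A. card (set_partitions (A - S)))"
proof -
  have block_notin: "insert a T \<notin> Q" if "Q \<in> set_partitions (A - S)" for Q S T
    using that a partition_onD1 by fastforce
  have "card (set_partitions (insert a A))
      = (\<Sum>S\<in>Pow A. card (insert (insert a S) ` set_partitions (A - S)))"
    unfolding set_partitions_insert[OF a]
  proof (rule card_UN_disjoint)
    show "\<forall>S\<in>Pow A. finite (insert (insert a S) ` set_partitions (A - S))"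
      using \<open>finite A\<close> by (auto intro: finitely_many_partition_on)
    show "\<forall>S\<in>Pow A. \<forall>T\<in>Pow A. S \<noteq> T \<longrightarrow>
        insert (insert a S) ` set_partitions (A - S) \<inter> insert (insert a T) ` set_partitions (A - T) = {}"
    proof (intro ballI impI)
      fix S T assume "S \<in> Pow A" "T \<in> Pow A" "S \<noteq> T"
      then have "insert a S \<noteq> insert a T"
        using a by (metis PowD insert_ident subsetD)
      have False if "Q \<in> set_partitions (A - S)"
        and "insert (insert a S) Q = insert (insert a T) R" for Q R
      proof -
        have "insert a T \<in> Q"
          using that(2) \<open>insert a S \<noteq> insert a T\<close> by (metis insertCI insertE)
        then show False
          using block_notin[OF that(1)] by blast
      qed
      then show "insert (insert a S) ` set_partitions (A - S) \<inter> insert (insert a T) ` set_partitions (A - T) = {}"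
        by blast
    qed
  qed (use \<open>finite A\<close> in simp)
  also have "\<dots> = (\<Sum>S\<in>Pow A. card (set_partitions (A - S)))"
  proof (intro sum.cong refl card_image inj_onI)
    fix S Q R assume "Q \<in> set_partitions (A - S)" "R \<in> set_partitions (A - S)"
      and "insert (insert a S) Q = insert (insert a S) R"
    then show "Q = R"
      using block_notin by (metis insert_ident)
  qed
  finally show ?thesis .
qed

lemma Bell_0: "Bell 0 = 1"
  by (simp add: Bell_def partition_on_empty)

lemma Bell_Suc: "Bell (Suc n) = (\<Sum>i\<le>n. (n choose i) * Bell (n - i))"
proof -
  have "Bell (Suc n) = card (set_partitions (insert n {0..<n}))"
    unfolding Bell_def by (simp add: atLeastLessThanSuc)
  also have "\<dots> = (\<Sum>S\<in>Pow {0..<n}. card (set_partitions ({0..<n} - S)))"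
    by (rule card_set_partitions_insert) auto
  also have "\<dots> = (\<Sum>S\<in>Pow {0..<n}. Bell (n - card S))"
    by (intro sum.cong refl)
      (simp add: card_set_partitions_eq_Bell card_Diff_subset finite_subset)
  also have "\<dots> = (\<Sum>i\<le>n. \<Sum>S\<in>{S\<in>Pow {0..<n}. card S = i}. Bell (n - card S))"
    by (rule sum.group[symmetric])
      (auto simp: card_mono[of "{0..<n}", simplified, THEN order_trans])
  also have "\<dots> = (\<Sum>i\<le>n. (n choose i) * Bell (n - i))"
  proof (intro sum.cong refl)
    fix i
    have "{S\<in>Pow {0..<n}. card S = i} = {S. S \<subseteq> {0..<n} \<and> card S = i}"
      by auto
    then show "(\<Sum>S\<in>{S\<in>Pow {0..<n}. card S = i}. Bell (n - card S)) = (n choose i) * Bell (n - i)"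
      by (simp add: n_subsets)
  qed
  finally show ?thesis .
qed

lemma fps_linear_ode_unique:
  fixes F G g :: "'a::field_char_0 fps"
  assumes "fps_deriv F = g * F" and "fps_deriv G = g * G" and "F $ 0 = G $ 0"
  shows "F = G"
proof (rule fps_ext)
  fix n show "F $ n = G $ n"
  proof (induction n rule: less_induct)
    case (less n)
    show ?case
    proof (cases n)
      case 0
      then show ?thesis using assms(3) by simp
    next
      case (Suc m)
      have "of_nat n * F $ n = (g * F) $ m"
        using arg_cong[OF assms(1), of "\<lambda>H. H $ m"] Suc by (simp del: of_nat_Suc)
      also have "\<dots> = (g * G) $ m"
        using less Suc by (auto simp: fps_mult_nth intro!: sum.cong)
      also have "\<dots> = of_nat n * G $ n"
        using arg_cong[OF assms(2), of "\<lambda>H. H $ m"] Suc by (simp del: of_nat_Suc)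
      finally show ?thesis
        using Suc by (simp del: of_nat_Suc)
    qed
  qed
qed

definition fps_neg_ln_1_minus_X :: "'a::field_char_0 fps" where
  "fps_neg_ln_1_minus_X = Abs_fps (\<lambda>n. if n = 0 then 0 else 1 / of_nat n)"

lemma fps_neg_ln_1_minus_X_nth_0 [simp]: "fps_neg_ln_1_minus_X $ 0 = 0"
  by (simp add: fps_neg_ln_1_minus_X_def)

lemma fps_deriv_neg_ln_1_minus_X:
  "fps_deriv fps_neg_ln_1_minus_X = (inverse (1 - fps_X) :: 'a::field_char_0 fps)"
proof -
  have "fps_deriv fps_neg_ln_1_minus_X = (Abs_fps (\<lambda>n. 1) :: 'a fps)"
    by (simp add: fps_eq_iff fps_neg_ln_1_minus_X_def del: of_nat_Suc)
  also have "\<dots> = inverse (1 - fps_X)"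
    by (simp add: fps_inverse_gp' [symmetric])
  finally show ?thesis .
qed

lemma fps_exp_compose_neg_ln_1_minus_X:
  "fps_exp 1 oo fps_neg_ln_1_minus_X = (inverse (1 - fps_X) :: 'a::field_char_0 fps)"
proof (rule fps_linear_ode_unique)
  show "fps_deriv (fps_exp 1 oo fps_neg_ln_1_minus_X)
      = inverse (1 - fps_X) * (fps_exp 1 oo fps_neg_ln_1_minus_X :: 'a fps)"
    by (simp add: fps_compose_deriv fps_deriv_neg_ln_1_minus_X mult.commute)
  show "fps_deriv (inverse (1 - fps_X) :: 'a fps) = inverse (1 - fps_X) * inverse (1 - fps_X)"
    by (simp add: fps_inverse_deriv power2_eq_square)
qed simp

lemma fps_deriv_power_neg_ln_1_minus_X:
  "(1 - fps_X) * fps_deriv (fps_neg_ln_1_minus_X ^ Suc k)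
     = of_nat (Suc k) * (fps_neg_ln_1_minus_X ^ k :: 'a::field_char_0 fps)"
proof -
  have "(1 - fps_X) * inverse (1 - fps_X :: 'a fps) = 1"
    by (intro inverse_mult_eq_1') simp
  then show ?thesis
    by (simp only: fps_deriv_power' fps_deriv_neg_ln_1_minus_X diff_Suc_1) (simp add: ac_simps)
qed

lemma fps_neg_ln_1_minus_X_power_nth_Suc:
  fixes L :: "'a::field_char_0 fps"
  defines "L \<equiv> fps_neg_ln_1_minus_X"
  shows "of_nat (Suc n) * (L ^ Suc k) $ Suc n
    = of_nat n * (L ^ Suc k) $ n + of_nat (Suc k) * (L ^ k) $ n"
proof -
  have "((1 - fps_X) * fps_deriv (L ^ Suc k)) $ n = (of_nat (Suc k) * L ^ k) $ n"
    unfolding L_def by (simp only: fps_deriv_power_neg_ln_1_minus_X)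
  moreover have "(1 - fps_X) * fps_deriv (L ^ Suc k) = fps_deriv (L ^ Suc k) - fps_X * fps_deriv (L ^ Suc k)"
    by (simp add: algebra_simps)
  ultimately show ?thesis
    by (cases n) (simp_all add: fps_X_mult_nth fps_of_nat [symmetric] algebra_simps
        del: of_nat_Suc power_Suc)
qed

lemma fps_neg_ln_1_minus_X_power_nth:
  "fact n * (fps_neg_ln_1_minus_X ^ k :: 'a::field_char_0 fps) $ n = fact k * of_nat (stirling n k)"
proof (induction k arbitrary: n)
  case 0
  then show ?case by (cases n) auto
next
  case (Suc k)
  note IH_k = Suc.IH
  show ?case
  proof (induction n)
    case (Suc n)
    let ?L = "fps_neg_ln_1_minus_X :: 'a fps"
    have "fact (Suc n) * (?L ^ Suc k) $ Suc n = fact n * (of_nat (Suc n) * (?L ^ Suc k) $ Suc n)"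
      by (simp add: algebra_simps)
    also have "\<dots> = of_nat n * (fact n * (?L ^ Suc k) $ n) + of_nat (Suc k) * (fact n * (?L ^ k) $ n)"
      by (simp only: fps_neg_ln_1_minus_X_power_nth_Suc) (simp add: algebra_simps)
    also have "\<dots> = fact (Suc k) * of_nat (stirling (Suc n) (Suc k))"
      by (simp only: Suc.IH IH_k) (simp add: algebra_simps)
    finally show ?case .
  qed simp
qed

definition Bell_egf :: "'a::field_char_0 fps" where
  "Bell_egf = Abs_fps (\<lambda>m. of_nat (Bell m) / fact m)"

lemma fps_deriv_Bell_egf_nth: "fps_deriv Bell_egf $ n = of_nat (Bell (Suc n)) / fact n"
  by (simp add: Bell_egf_def del: of_nat_Suc)

lemma fps_deriv_Bell_egf: "fps_deriv Bell_egf = fps_exp 1 * (Bell_egf :: 'a::field_char_0 fps)"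
proof (rule fps_ext)
  fix n
  have "fps_deriv Bell_egf $ n = (\<Sum>i\<le>n. of_nat (n choose i) * of_nat (Bell (n - i))) / (fact n :: 'a)"
    by (simp only: fps_deriv_Bell_egf_nth Bell_Suc) simp
  also have "\<dots> = (\<Sum>i\<le>n. (1 / fact i) * (of_nat (Bell (n - i)) / fact (n - i)))"
    by (simp add: sum_divide_distrib binomial_fact field_simps)
  also have "\<dots> = (fps_exp 1 * Bell_egf) $ n"
    by (simp add: fps_mult_nth Bell_egf_def atLeast0AtMost)
  finally show "fps_deriv Bell_egf $ n = (fps_exp 1 * Bell_egf :: 'a fps) $ n" .
qed

lemma Bell_egf_eq: "Bell_egf = fps_exp 1 oo (fps_exp 1 - 1 :: 'a::field_char_0 fps)"
proof (rule fps_linear_ode_unique)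
  show "fps_deriv Bell_egf = fps_exp 1 * (Bell_egf :: 'a fps)"
    by (rule fps_deriv_Bell_egf)
  show "fps_deriv (fps_exp 1 oo (fps_exp 1 - 1)) = fps_exp 1 * (fps_exp 1 oo (fps_exp 1 - 1 :: 'a fps))"
    by (simp add: fps_compose_deriv mult.commute)
qed (simp add: Bell_egf_def Bell_0)

lemma aB_egf_eq: "aB_egf = fps_deriv Bell_egf oo fps_neg_ln_1_minus_X"
proof -
  let ?L = "fps_neg_ln_1_minus_X :: real fps"
  have "inverse (1 - fps_X) - 1 = (fps_exp 1 - 1) oo ?L"
    by (simp add: fps_compose_sub_distrib fps_exp_compose_neg_ln_1_minus_X)
  then have "fps_exp 1 oo (inverse (1 - fps_X) - 1) = Bell_egf oo ?L"
    by (simp add: fps_compose_assoc Bell_egf_eq)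
  then have "aB_egf = (fps_exp 1 oo ?L) * (Bell_egf oo ?L)"
    by (simp add: aB_egf_def fps_exp_compose_neg_ln_1_minus_X)
  also have "\<dots> = fps_deriv Bell_egf oo ?L"
    by (simp add: fps_compose_mult_distrib fps_deriv_Bell_egf)
  finally show ?thesis .
qed

theorem mainTheorem20:
  fixes n :: nat
  shows "aB n = (\<Sum>k=0..n. real (stirling n k) * real (Bell (k + 1)))"
proof -
  let ?L = "fps_neg_ln_1_minus_X :: real fps"
  have "aB n = fact n * (\<Sum>k=0..n. real (Bell (Suc k)) / fact k * (?L ^ k) $ n)"
    by (simp only: aB_def aB_egf_eq fps_compose_nth fps_deriv_Bell_egf_nth)
  also have "\<dots> = (\<Sum>k=0..n. real (Bell (Suc k)) / fact k * (fact n * (?L ^ k) $ n))"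
    by (simp add: sum_distrib_left mult.left_commute)
  also have "\<dots> = (\<Sum>k=0..n. real (stirling n k) * real (Bell (k + 1)))"
    by (simp add: fps_neg_ln_1_minus_X_power_nth mult.commute)
  finally show ?thesis .
qed

end
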